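(* Let $\gamma,\lambda\in(0,1)$, $H>1$ and $T\in(0,\infty)$. Let $g:[0,\infty)\to\mathbb R$ be a nonnegative continuous function with $|g(t)-g(s)|\le H|t-s|^\gamma$ for all $t,s\ge0$ and $g(0)=0$. Then $$\Big(\int_0^T g(t)\,dt\Big)^{\frac{\gamma\lambda+1}{\gamma+1}}\le N\,H^{1/\gamma}\int_0^T g(t)^\lambda\,dt,$$ where $N=N(\gamma,\lambda)$. *)

theory Defs
  imports "HOL-Analysis.Analysis"
begin

end

theory Submission
  imports Defs
begin

text \<open>
  Let M = g(t0) be the maximum of g on [0, T]. On the one hand
  int g <= M^(1-lam) * int g^lam. On the other hand g(0) = 0 and the Hoelder bound force
  t0 >= d = (M / 2H)^(1/gam) and g >= M/2 on [t0 - d, t0], so int g^lam >= d (M/2)^lam,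
  a lower bound growing like M^(1/gam + lam). Raise the first estimate to the power
  a = (gam lam + 1) / (gam + 1) and trade the factor M^((1-lam) a) for the (1-a)-th power of
  the second estimate; the powers of M balance exactly because (1 - a)(1/gam + lam) = (1 - lam) a.
\<close>

lemma le_powr_mult_powr:
  fixes x M lam :: real
  assumes "0 \<le> x" "x \<le> M" "lam \<le> 1"
  shows "x \<le> M powr (1 - lam) * x powr lam"
proof (cases "x = 0")
  case False
  then have "x = x powr (1 - lam) * x powr lam"
    using assms by (simp add: powr_add[symmetric])
  also have "\<dots> \<le> M powr (1 - lam) * x powr lam"
    using assms by (intro mult_right_mono powr_mono2) auto
  finally show ?thesis .
qed simp


lemma integral_le_max_powr_mult_integral_powr:
  fixes f :: "real \<Rightarrow> real" and M lam :: real
  assumes "continuous_on {a..b} f" "\<And>t. t \<in> {a..b} \<Longrightarrow> 0 \<le> f t \<and> f t \<le> M"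
    and "0 < lam" "lam \<le> 1"
  shows "integral {a..b} f \<le> M powr (1 - lam) * integral {a..b} (\<lambda>t. f t powr lam)"
proof -
  have "continuous_on {a..b} (\<lambda>t. f t powr lam)"
    using assms by (intro continuous_on_powr' continuous_on_const) auto
  then have int: "(\<lambda>t. f t powr lam) integrable_on {a..b}"
    by (rule integrable_continuous_interval)
  have "integral {a..b} f \<le> integral {a..b} (\<lambda>t. M powr (1 - lam) * f t powr lam)"
    using assms integrable_continuous_interval[OF assms(1)] integrable_on_cmult_left[OF int]
    by (intro integral_le le_powr_mult_powr) auto
  also have "\<dots> = M powr (1 - lam) * integral {a..b} (\<lambda>t. f t powr lam)"
    by simp
  finally show ?thesis .
qed


lemma integral_ge_on_subinterval:
  fixes f :: "real \<Rightarrow> real"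
  assumes "continuous_on {a..b} f" "\<And>t. t \<in> {a..b} \<Longrightarrow> 0 \<le> f t"
    and "{u..v} \<subseteq> {a..b}" "u \<le> v" "\<And>t. t \<in> {u..v} \<Longrightarrow> c \<le> f t"
  shows "(v - u) * c \<le> integral {a..b} f"
proof -
  have int: "f integrable_on {a..b}"
    using assms(1) by (rule integrable_continuous_interval)
  then have int_uv: "f integrable_on {u..v}"
    using assms(3) by (rule integrable_on_subinterval)
  have "(v - u) * c = integral {u..v} (\<lambda>_. c)"
    using assms(4) by simp
  also have "\<dots> \<le> integral {u..v} f"
    using int_uv assms(5) by (intro integral_le) auto
  also have "\<dots> \<le> integral {a..b} f"
    using assms int_uv int by (intro integral_subset_le) auto
  finally show ?thesis .
qed


lemma holder_increment_le:
  fixes gam H c x :: real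
  assumes "0 < gam" "0 < H" "0 \<le> c" "\<bar>x\<bar> \<le> (c / H) powr (1 / gam)"
  shows "H * \<bar>x\<bar> powr gam \<le> c"
proof -
  have "\<bar>x\<bar> powr gam \<le> ((c / H) powr (1 / gam)) powr gam"
    using assms by (intro powr_mono2) auto
  also have "\<dots> = c / H"
    using assms by (simp add: powr_powr)
  finally show ?thesis using assms by (simp add: field_simps)
qed


lemma holder_plateau_below_max:
  fixes g :: "real \<Rightarrow> real" and gam H M t0 :: real
  assumes holder: "\<forall>t\<ge>0. \<forall>s\<ge>0. \<bar>g t - g s\<bar> \<le> H * \<bar>t - s\<bar> powr gam"
    and "0 < gam" "0 < H" "g 0 = 0" "0 \<le> t0" "g t0 = M" "0 < M"
  defines "d \<equiv> (M / (2 * H)) powr (1 / gam)"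
  shows "d \<le> t0" and "\<And>t. t \<in> {t0 - d..t0} \<Longrightarrow> M / 2 \<le> g t"
proof -
  have close: "\<bar>g t0 - g t\<bar> \<le> M / 2" if "0 \<le> t" "\<bar>t0 - t\<bar> \<le> d" for t
  proof -
    have "\<bar>g t0 - g t\<bar> \<le> H * \<bar>t0 - t\<bar> powr gam"
      using holder assms that by blast
    also have "\<dots> \<le> M / 2"
      using assms that by (intro holder_increment_le) (auto simp: d_def)
    finally show ?thesis .
  qed
  show "d \<le> t0"
  proof (rule ccontr)
    assume "\<not> d \<le> t0"
    then have "\<bar>g t0 - g 0\<bar> \<le> M / 2"
      using assms by (intro close) auto
    then show False using assms by simp
  qed
  show "M / 2 \<le> g t" if "t \<in> {t0 - d..t0}" for t
  proof -
    have "\<bar>g t0 - g t\<bar> \<le> M / 2"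
      using close[of t] that \<open>d \<le> t0\<close> by auto
    then have "g t0 - g t \<le> M / 2"
      by (rule abs_le_D1)
    then show ?thesis using \<open>g t0 = M\<close> by simp
  qed
qed


lemma interpolation_exponent:
  fixes gam lam :: real
  assumes "0 < gam"
  shows "(1 - (gam * lam + 1) / (gam + 1)) * (1 / gam + lam)
         = (1 - lam) * ((gam * lam + 1) / (gam + 1))"
proof -
  have "1 - (gam * lam + 1) / (gam + 1) = gam * (1 - lam) / (gam + 1)"
    using assms by (simp add: field_simps)
  moreover have "1 / gam + lam = (gam * lam + 1) / gam"
    using assms by (simp add: field_simps)
  ultimately show ?thesis using assms by simp
qed


lemma max_powr_le_plateau_powr:
  fixes gam lam M H :: real
  assumes "0 < gam" "0 < lam" "0 < M" "1 \<le> H"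
  defines "a \<equiv> (gam * lam + 1) / (gam + 1)"
  shows "M powr ((1 - lam) * a)
         \<le> 2 powr ((1 - lam) * a) * H powr (1 / gam)
           * ((M / (2 * H)) powr (1 / gam) * (M / 2) powr lam) powr (1 - a)"
proof -
  define e where "e = (1 - lam) * a"
  have "0 \<le> a" using assms unfolding a_def by (simp add: field_simps)
  define m where "m = M / 2"
  have "0 < m" using assms by (simp add: m_def)
  have "(M / (2 * H)) powr (1 / gam) * (M / 2) powr lam
        = (m / H) powr (1 / gam) * m powr lam"
    by (simp add: m_def)
  also have "\<dots> = m powr (1 / gam + lam) / H powr (1 / gam)"
    using \<open>0 < m\<close> assms by (simp add: powr_divide powr_add)
  finally have "((M / (2 * H)) powr (1 / gam) * (M / 2) powr lam) powr (1 - a)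
                = m powr ((1 / gam + lam) * (1 - a)) / H powr (1 / gam * (1 - a))"
    using \<open>0 < m\<close> assms by (simp add: powr_divide powr_powr)
  also have "\<dots> = m powr e / H powr ((1 - a) / gam)"
    using interpolation_exponent[OF \<open>0 < gam\<close>, of lam]
    by (simp add: e_def a_def mult.commute)
  finally have "((M / (2 * H)) powr (1 / gam) * (M / 2) powr lam) powr (1 - a)
                = m powr e / H powr ((1 - a) / gam)" .
  moreover have "2 powr e * H powr (1 / gam) * (m powr e / H powr ((1 - a) / gam))
                 = M powr e * H powr (a / gam)"
  proof -
    have "(1 - a) / gam + a / gam = 1 / gam"
      by (simp add: diff_divide_distrib)
    then have "H powr (1 / gam) = H powr ((1 - a) / gam) * H powr (a / gam)"
      by (metis powr_add)
    moreover have "2 powr e * m powr e = M powr e"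
      using assms by (simp add: m_def powr_mult[symmetric])
    ultimately show ?thesis using assms by (simp add: field_simps)
  qed
  moreover have "M powr e \<le> M powr e * H powr (a / gam)"
    using assms \<open>0 \<le> a\<close> by (simp add: ge_one_powr_ge_zero)
  ultimately show ?thesis by (simp add: e_def)
qed


lemma interpolation_inequality:
  fixes gam lam M H I J :: real
  assumes "0 < gam" "0 < lam" "lam < 1" "0 < M" "1 \<le> H" "0 \<le> I"
    and "I \<le> M powr (1 - lam) * J"
    and "(M / (2 * H)) powr (1 / gam) * (M / 2) powr lam \<le> J"
  defines "a \<equiv> (gam * lam + 1) / (gam + 1)"
  shows "I powr a \<le> 2 powr ((1 - lam) * a) * H powr (1 / gam) * J"
proof -
  define K where "K = (M / (2 * H)) powr (1 / gam) * (M / 2) powr lam"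
  have "0 < a" "a < 1"
    using assms unfolding a_def by (auto simp: field_simps add_pos_pos)
  have "0 < K" using assms unfolding K_def by simp
  then have "0 < J" using assms unfolding K_def by linarith
  have "I powr a \<le> (M powr (1 - lam) * J) powr a"
    using assms \<open>0 < a\<close> by (intro powr_mono2) auto
  also have "\<dots> = M powr ((1 - lam) * a) * J powr a"
    using assms \<open>0 < J\<close> by (simp add: powr_mult powr_powr)
  also have "\<dots> \<le> (2 powr ((1 - lam) * a) * H powr (1 / gam) * K powr (1 - a)) * J powr a"
    using max_powr_le_plateau_powr[OF assms(1,2,4,5)]
    unfolding K_def a_def by (intro mult_right_mono) auto
  also have "\<dots> \<le> (2 powr ((1 - lam) * a) * H powr (1 / gam) * J powr (1 - a)) * J powr a"
    using assms \<open>0 < K\<close> \<open>a < 1\<close> unfolding K_def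
    by (intro mult_right_mono mult_left_mono powr_mono2) auto
  also have "\<dots> = 2 powr ((1 - lam) * a) * H powr (1 / gam) * J"
    using \<open>0 < J\<close> by (simp add: mult.assoc powr_add[symmetric])
  finally show ?thesis .
qed


lemma holder_integral_powr_le:
  fixes g :: "real \<Rightarrow> real" and gam lam H T :: real
  assumes "0 < gam" "0 < lam" "lam < 1" "1 \<le> H" "0 \<le> T"
    and cont: "continuous_on {0..T} g" and nonneg: "\<forall>t\<in>{0..T}. 0 \<le> g t"
    and holder: "\<forall>t\<ge>0. \<forall>s\<ge>0. \<bar>g t - g s\<bar> \<le> H * \<bar>t - s\<bar> powr gam"
    and "g 0 = 0"
  defines "a \<equiv> (gam * lam + 1) / (gam + 1)"
  shows "integral {0..T} g powr a
         \<le> 2 powr ((1 - lam) * a) * H powr (1 / gam) * integral {0..T} (\<lambda>t. g t powr lam)"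
proof -
  define I where "I = integral {0..T} g"
  define J where "J = integral {0..T} (\<lambda>t. g t powr lam)"
  obtain t0 where t0: "t0 \<in> {0..T}" and t0_max: "\<forall>t\<in>{0..T}. g t \<le> g t0"
    using continuous_attains_sup[OF compact_Icc _ cont] \<open>0 \<le> T\<close> by auto
  define M where "M = g t0"
  have cont_powr: "continuous_on {0..T} (\<lambda>t. g t powr lam)"
    using cont nonneg \<open>0 < lam\<close> by (intro continuous_on_powr' continuous_on_const) auto
  have "0 \<le> I" "0 \<le> J"
    using nonneg integrable_continuous_interval[OF cont] integrable_continuous_interval[OF cont_powr]
    unfolding I_def J_def by (auto intro: integral_nonneg)
  have I_le: "I \<le> M powr (1 - lam) * J"
    unfolding I_def J_def M_def using assms t0_max
    by (intro integral_le_max_powr_mult_integral_powr) auto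
  show ?thesis
  proof (cases "M = 0")
    case True
    then have "I = 0" using I_le \<open>0 \<le> I\<close> by simp
    then show ?thesis using \<open>0 \<le> J\<close> unfolding I_def J_def by simp
  next
    case False
    then have "0 < M" using nonneg t0 unfolding M_def by force
    define d where "d = (M / (2 * H)) powr (1 / gam)"
    have "d \<le> t0" and plateau: "\<And>t. t \<in> {t0 - d..t0} \<Longrightarrow> M / 2 \<le> g t"
      using holder_plateau_below_max[OF holder \<open>0 < gam\<close> _ \<open>g 0 = 0\<close> _ M_def[symmetric] \<open>0 < M\<close>]
        assms t0 unfolding d_def by auto
    have "(t0 - (t0 - d)) * (M / 2) powr lam \<le> J"
      unfolding J_def using cont_powr nonneg t0 \<open>d \<le> t0\<close> \<open>0 < M\<close> \<open>0 < lam\<close> plateau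
      by (intro integral_ge_on_subinterval powr_mono2) (auto simp: d_def)
    then show ?thesis
      using interpolation_inequality[OF assms(1-3) \<open>0 < M\<close> assms(4) \<open>0 \<le> I\<close> I_le] \<open>0 < lam\<close>
      unfolding I_def J_def a_def d_def by simp
  qed
qed


theorem lemma4p2:
  fixes gam lam :: real
  assumes "0 < gam" "gam < 1" "0 < lam" "lam < 1"
  shows "\<exists>N::real. \<forall>(H::real) (T::real) (g::real \<Rightarrow> real).
           H > 1 \<longrightarrow> T > 0 \<longrightarrow>
           continuous_on {0..} g \<longrightarrow>
           (\<forall>t\<ge>0. g t \<ge> 0) \<longrightarrow>
           (\<forall>t\<ge>0. \<forall>s\<ge>0. \<bar>g t - g s\<bar> \<le> H * \<bar>t - s\<bar> powr gam) \<longrightarrow>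
           g 0 = 0 \<longrightarrow>
           (integral {0..T} g) powr ((gam * lam + 1) / (gam + 1))
             \<le> N * H powr (1 / gam) * integral {0..T} (%t. g t powr lam)"
proof (intro exI allI impI)
  fix H T :: real and g :: "real \<Rightarrow> real"
  assume "H > 1" "T > 0" "continuous_on {0..} g" "\<forall>t\<ge>0. g t \<ge> 0"
    "\<forall>t\<ge>0. \<forall>s\<ge>0. \<bar>g t - g s\<bar> \<le> H * \<bar>t - s\<bar> powr gam" "g 0 = 0"
  moreover have "continuous_on {0..T} g"
    using \<open>continuous_on {0..} g\<close> by (rule continuous_on_subset) auto
  ultimately show "(integral {0..T} g) powr ((gam * lam + 1) / (gam + 1))
      \<le> 2 powr ((1 - lam) * ((gam * lam + 1) / (gam + 1))) * H powr (1 / gam)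
         * integral {0..T} (\<lambda>t. g t powr lam)"
    using assms by (intro holder_integral_powr_le) auto
qed

end
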